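(* Let $X\subseteq\mathbb{N}$ be finite, $\omega^{n+3}$-large and exp-sparse, and let $d\in\mathbb{N}$ with $d\le\min X$. Then $X$ admits an $(\omega^n,d)$-grouping: for every colouring $P:[X]^2\to2$ there is an $(\omega^n,d)$-grouping for $P$.
   Context: Ordinals below $\omega^\omega$ are in Cantor normal form; a natural number $d$ is the ordinal $\omega^0\cdot d$; $\omega^j\cdot m$ = sum of $m$ copies of $\omega^j$. For $m\in\mathbb{N}$: $0[m]=0$, $(\beta+1)[m]=\beta$, $(\beta+\omega^{n})[m]=\beta+\omega^{n-1}\cdot m$ for $n\ge1$. A finite $X=\{x_0<\dots<x_{\ell-1}\}\subseteq\mathbb{N}$ is $\alpha$-large if $\alpha[x_0]\cdots[x_{\ell-1}]=0$ (so $d$-large means having at least $d$ elements). A set $X$ with $\min X\ge3$ is exp-sparse if $x<y$ in $X$ implies $4^x<y$. For $P:[X]^2\to2$, a finite sequence $\langle F_i\subseteq X:i<\ell\rangle$ of finite sets is an $(\alpha,\beta)$-grouping for $P$ if: (1) $\max F_i<\min F_j$ for $i<j<\ell$; (2) each $F_i$ is $\alpha$-large; (3) $\{\max F_i:i<\ell\}$ is $\beta$-large; (4) for all $i<j<\ell$, $x,x'\in F_i$, $y,y'\in F_j$: $P(x,y)=P(x',y')$. *)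

theory Defs
  imports Main
begin

text \<open>Ordinals below omega^omega in Cantor normal form: the list [e1,...,ek] with
  e1 \<ge> ... \<ge> ek denotes omega^e1 + ... + omega^ek; [] denotes 0.\<close>

type_synonym ord_cnf = "nat list"

definition cnf_wf :: "ord_cnf \<Rightarrow> bool" where
  "cnf_wf \<alpha> \<longleftrightarrow> sorted_wrt (\<ge>) \<alpha>"

definition omega_pow :: "nat \<Rightarrow> ord_cnf" where
  "omega_pow n = [n]"

definition ord_of_nat :: "nat \<Rightarrow> ord_cnf" where
  "ord_of_nat d = replicate d 0"

text \<open>Fundamental sequence: 0[m]=0, (b+1)[m]=b, (b+omega^n)[m] = b + omega^(n-1)*m for n \<ge> 1.\<close>
definition fund :: "ord_cnf \<Rightarrow> nat \<Rightarrow> ord_cnf" where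
  "fund \<alpha> m = (if \<alpha> = [] then []
     else if last \<alpha> = 0 then butlast \<alpha>
     else butlast \<alpha> @ replicate m (last \<alpha> - 1))"

definition large :: "ord_cnf \<Rightarrow> nat set \<Rightarrow> bool" where
  "large \<alpha> X \<longleftrightarrow> finite X \<and> foldl fund \<alpha> (sorted_list_of_set X) = []"

definition exp_sparse :: "nat set \<Rightarrow> bool" where
  "exp_sparse X \<longleftrightarrow> (\<forall>x\<in>X. 3 \<le> x) \<and> (\<forall>x\<in>X. \<forall>y\<in>X. x < y \<longrightarrow> 4 ^ x < y)"

text \<open>(alpha,beta)-grouping for the colouring P (only values P x y with x < y matter).\<close>
definition grouping :: "ord_cnf \<Rightarrow> ord_cnf \<Rightarrow> nat set \<Rightarrow> (nat \<Rightarrow> nat \<Rightarrow> bool) \<Rightarrow> nat set list \<Rightarrow> bool" where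
  "grouping \<alpha> \<beta> X P F \<longleftrightarrow>
     (\<forall>i<length F. F ! i \<subseteq> X \<and> finite (F ! i)) \<and>
     (\<forall>i j. i < j \<and> j < length F \<longrightarrow> Max (F ! i) < Min (F ! j)) \<and>
     (\<forall>i<length F. large \<alpha> (F ! i)) \<and>
     large \<beta> {Max (F ! i) | i. i < length F} \<and>
     (\<forall>i j. i < j \<and> j < length F \<longrightarrow>
        (\<forall>x\<in>F ! i. \<forall>x'\<in>F ! i. \<forall>y\<in>F ! j. \<forall>y'\<in>F ! j. P x y = P x' y'))"

end

theory Submission
  imports Defs
begin

text \<open>After its minimum \<open>x\<^sub>0\<close>, an \<open>\<omega>\<^sup>n\<^sup>+\<^sup>3\<close>-large set splits into \<open>x\<^sub>0\<close> consecutive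
  \<open>\<omega>\<^sup>n\<^sup>+\<^sup>2\<close>-large blocks. Each block \<open>D\<close> is thinned to an \<open>\<omega>\<^sup>n\<^sup>+\<^sup>1\<close>-large set on which
  every colouring \<open>P x\<close> with \<open>x < min D\<close> is constant; exp-sparseness bounds the number of
  such \<open>x\<close> by \<open>log\<^sub>4 (min D)\<close>, and an \<open>\<omega>\<^sup>k\<^sup>+\<^sup>1\<close>-large exp-sparse set \<open>Y\<close> has an
  \<open>\<omega>\<^sup>k\<close>-large subset homogeneous for any \<open>4\<^sup>m\<close> colourings, \<open>4\<^sup>m \<le> min Y\<close>. In the
  resulting end-homogeneous sequence \<open>E\<^sub>0 < E\<^sub>1 < \<dots>\<close> the colour of \<open>x \<in> E\<^sub>i\<close>, \<open>y \<in> E\<^sub>j\<close>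
  is \<open>P x (min E\<^sub>j)\<close>, so thinning the first \<open>d\<close> blocks once more, to be homogeneous for
  these \<open>d\<close> colourings, gives the grouping.

  The basic step, from \<open>\<omega>\<^sup>k\<cdot>2\<close> to \<open>\<omega>\<^sup>k\<close> for one colouring, is by induction on \<open>k\<close>. Let
  \<open>a\<close> and \<open>b\<close> be the minima of the two \<open>\<omega>\<^sup>k\<^sup>+\<^sup>1\<close>-large halves; the upper half contains
  \<open>b/2\<close> homogeneous \<open>\<omega>\<^sup>k\<close>-large blocks. Either \<open>a\<close> of them have the colour of \<open>a\<close>, or
  the lower half is homogeneous, or it contains a point \<open>e\<close> of the other colour; then
  \<open>4e < b\<close> leaves at least \<open>e\<close> blocks of the colour of \<open>e\<close>.\<close>

section \<open>Largeness\<close>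

lemma sorted_list_of_set_strict_sorted:
  "sorted_wrt (<) xs \<Longrightarrow> sorted_list_of_set (set xs) = (xs :: nat list)"
  by (simp add: strict_sorted_iff sorted_list_of_set.idem_if_sorted_distinct)

lemma fund_Nil [simp]: "fund [] m = []"
  by (simp add: fund_def)

lemma foldl_fund_Nil [simp]: "foldl fund [] xs = []"
  by (induction xs) auto

lemma fund_append: "\<gamma> \<noteq> [] \<Longrightarrow> fund (\<beta> @ \<gamma>) m = \<beta> @ fund \<gamma> m"
  by (simp add: fund_def butlast_append)

lemma fund_mono_prefix: "b \<le> a \<Longrightarrow> \<exists>\<delta>. fund \<alpha> a = fund \<alpha> b @ \<delta>"
  by (auto simp: fund_def le_iff_add replicate_add)

lemma fund_omega_Suc: "fund [Suc k] a = replicate a k"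
  by (simp add: fund_def)

lemma fund_replicate_0: "fund (replicate d 0) x = replicate (d - 1) 0"
  by (simp add: fund_def butlast_conv_take)

lemma foldl_fund_append_split:
  "foldl fund (\<beta> @ \<gamma>) xs = [] \<Longrightarrow>
   \<exists>ys zs. xs = ys @ zs \<and> foldl fund \<gamma> ys = [] \<and> foldl fund \<beta> zs = []"
proof (induction xs arbitrary: \<gamma>)
  case (Cons x xs)
  show ?case
  proof (cases "\<gamma> = []")
    case True
    with Cons.prems show ?thesis by (intro exI[of _ "[]"] exI[of _ "x # xs"]) auto
  next
    case False
    with Cons.prems have "foldl fund (\<beta> @ fund \<gamma> x) xs = []" by (simp add: fund_append)
    from Cons.IH[OF this] obtain ys zs
      where "xs = ys @ zs" "foldl fund (fund \<gamma> x) ys = []" "foldl fund \<beta> zs = []"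
      by blast
    then show ?thesis by (intro exI[of _ "x # ys"] exI[of _ zs]) auto
  qed
qed simp

lemma foldl_fund_append_prefix:
  "foldl fund \<gamma> ys = [] \<Longrightarrow> \<exists>ys1 ys2. ys = ys1 @ ys2 \<and> foldl fund (\<beta> @ \<gamma>) ys1 = \<beta>"
proof (induction ys arbitrary: \<gamma>)
  case (Cons x xs)
  show ?case
  proof (cases "\<gamma> = []")
    case True
    then show ?thesis by (intro exI[of _ "[]"] exI[of _ "x # xs"]) auto
  next
    case False
    with Cons.prems have "foldl fund (fund \<gamma> x) xs = []" by simp
    from Cons.IH[OF this] obtain ys1 ys2
      where "xs = ys1 @ ys2" "foldl fund (\<beta> @ fund \<gamma> x) ys1 = \<beta>"
      by blast
    with False show ?thesis by (intro exI[of _ "x # ys1"] exI[of _ ys2]) (auto simp: fund_append)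
  qed
qed simp

lemma large_finite: "large \<alpha> A \<Longrightarrow> finite A"
  by (simp add: large_def)

lemma large_Nil_iff [simp]: "large [] A \<longleftrightarrow> finite A"
  by (simp add: large_def)

lemma large_empty_iff [simp]: "large \<alpha> {} \<longleftrightarrow> \<alpha> = []"
  by (simp add: large_def)

lemma large_insert_less:
  assumes "finite A" "\<forall>y\<in>A. x < y"
  shows "large \<alpha> (insert x A) \<longleftrightarrow> large (fund \<alpha> x) A"
proof -
  have "sorted_wrt (<) (x # sorted_list_of_set A)"
    using assms by (simp add: sorted_list_of_set.strict_sorted_key_list_of_set)
  then have "sorted_list_of_set (insert x A) = x # sorted_list_of_set A"
    using sorted_list_of_set_strict_sorted assms(1) by fastforce
  with assms(1) show ?thesis by (simp add: large_def)
qed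

lemma large_Min_iff:
  assumes "finite A" "A \<noteq> {}"
  shows "large \<alpha> A \<longleftrightarrow> large (fund \<alpha> (Min A)) (A - {Min A})"
proof -
  have "A = insert (Min A) (A - {Min A})" using assms Min_in by blast
  moreover have "\<forall>y\<in>A - {Min A}. Min A < y" using assms by (simp add: order_le_neq_trans)
  ultimately show ?thesis using large_insert_less[of "A - {Min A}" "Min A" \<alpha>] assms by simp
qed

lemma large_omega_Suc_iff:
  "finite A \<Longrightarrow> A \<noteq> {} \<Longrightarrow> large [Suc k] A \<longleftrightarrow> large (replicate (Min A) k) (A - {Min A})"
  using large_Min_iff[of A "[Suc k]"] by (simp add: fund_omega_Suc)

lemma large_omega_Suc_insert:
  "finite B \<Longrightarrow> \<forall>y\<in>B. x < y \<Longrightarrow> large (replicate x k) B \<Longrightarrow> large [Suc k] (insert x B)"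
  using large_insert_less[of B x "[Suc k]"] by (simp add: fund_omega_Suc)

lemma large_replicate_0_iff: "large (replicate d 0) A \<longleftrightarrow> finite A \<and> d \<le> card A"
proof -
  have "foldl fund (replicate d 0) xs = replicate (d - length xs) 0" for xs
    by (induction xs arbitrary: d) (auto simp: fund_replicate_0)
  then show ?thesis by (auto simp: large_def)
qed

text \<open>The list \<open>\<beta> @ \<gamma>\<close> denotes \<open>\<beta> + \<gamma>\<close> and \<^const>\<open>fund\<close> acts on the last term first, so the
  lower part of the set pays for \<open>\<gamma>\<close>.\<close>
lemma large_append_split:
  assumes "large (\<beta> @ \<gamma>) S"
  obtains A B where "S = A \<union> B" "\<forall>x\<in>A. \<forall>y\<in>B. x < y" "large \<gamma> A" "large \<beta> B"
proof -
  have fin: "finite S" using assms by (simp add: large_def)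
  from assms obtain ys zs where yz: "sorted_list_of_set S = ys @ zs"
      "foldl fund \<gamma> ys = []" "foldl fund \<beta> zs = []"
    using foldl_fund_append_split unfolding large_def by blast
  have sorted: "sorted_wrt (<) (ys @ zs)"
    using yz(1) by (metis sorted_list_of_set.strict_sorted_key_list_of_set)
  have "S = set ys \<union> set zs"
    using yz(1) fin by (metis set_append sorted_list_of_set.set_sorted_key_list_of_set)
  with sorted yz that[of "set ys" "set zs"] show ?thesis
    by (auto simp: large_def sorted_wrt_append sorted_list_of_set_strict_sorted)
qed

lemma large_superset: "finite B \<Longrightarrow> A \<subseteq> B \<Longrightarrow> large \<alpha> A \<Longrightarrow> large \<alpha> B"
proof (induction "card B" arbitrary: B A \<alpha> rule: less_induct)
  case less
  show ?case
  proof (cases "B = {} \<or> \<alpha> = []")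
    case True
    with less.prems show ?thesis by auto
  next
    case False
    define b where "b = Min B"
    have A_ne: "A \<noteq> {}" and fin_A: "finite A"
      using False less.prems by (auto intro: finite_subset)
    have b_le: "b \<le> Min A"
      using less.prems(1,2) fin_A A_ne b_def by (simp add: Min_le_iff subset_iff)
    have "b \<in> B" using less.prems(1) False b_def by simp
    then have "card (B - {b}) < card B" by (intro card_Diff1_less less.prems(1))
    then have IH: "large (fund \<alpha> b) (B - {b})" if "A' \<subseteq> B - {b}" "large (fund \<alpha> b) A'" for A'
      using less.hyps[of "B - {b}"] less.prems(1) that by simp
    have B_iff: "large \<alpha> B \<longleftrightarrow> large (fund \<alpha> b) (B - {b})"
      using large_Min_iff less.prems(1) False b_def by blast
    have A_large: "large (fund \<alpha> (Min A)) (A - {Min A})"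
      using large_Min_iff fin_A A_ne less.prems(3) by blast
    show ?thesis
    proof (cases "b \<in> A")
      case True
      then have "Min A = b" using b_le fin_A by (simp add: antisym)
      moreover have "A - {b} \<subseteq> B - {b}" using less.prems(2) by blast
      ultimately show ?thesis using A_large IH B_iff by simp
    next
      case False
      txt \<open>A larger first element leaves a larger ordinal to pay for.\<close>
      obtain \<delta> where "fund \<alpha> (Min A) = fund \<alpha> b @ \<delta>" using fund_mono_prefix[OF b_le] by blast
      with A_large obtain A1 A2 where "A - {Min A} = A1 \<union> A2" "large (fund \<alpha> b) A2"
        by (auto elim: large_append_split)
      moreover have "A \<subseteq> B - {b}" using False less.prems(2) by blast
      ultimately show ?thesis using IH[of A2] B_iff by blast
    qed
  qed
qed

lemma large_append_Un:
  assumes "large \<gamma> A" "large \<beta> B" "\<forall>x\<in>A. \<forall>y\<in>B. x < y"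
  shows "large (\<beta> @ \<gamma>) (A \<union> B)"
proof -
  have fin: "finite A" "finite B" using assms large_finite by auto
  define ys zs where "ys = sorted_list_of_set A" and "zs = sorted_list_of_set B"
  have sorted: "sorted_wrt (<) (ys @ zs)" using assms fin unfolding ys_def zs_def
    by (auto simp: sorted_wrt_append sorted_list_of_set.strict_sorted_key_list_of_set)
  have AB: "sorted_list_of_set (A \<union> B) = ys @ zs"
    using sorted_list_of_set_strict_sorted[OF sorted] fin ys_def zs_def by simp
  have "foldl fund \<gamma> ys = []" using assms(1) ys_def by (simp add: large_def)
  then obtain ys1 ys2 where ys: "ys = ys1 @ ys2" "foldl fund (\<beta> @ \<gamma>) ys1 = \<beta>"
    using foldl_fund_append_prefix by blast
  have sorted2: "sorted_wrt (<) (ys2 @ zs)" using sorted ys(1) by (simp add: sorted_wrt_append)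
  have "large \<beta> (set (ys2 @ zs))"
    using large_superset[of "set (ys2 @ zs)" B \<beta>] assms(2) fin zs_def by simp
  then have "foldl fund \<beta> (ys2 @ zs) = []"
    unfolding large_def sorted_list_of_set_strict_sorted[OF sorted2] by simp
  with AB ys fin show ?thesis by (simp add: large_def)
qed

lemma large_append_right:
  assumes "large (\<beta> @ \<gamma>) S"
  shows "large \<gamma> S"
proof -
  obtain A B where "S = A \<union> B" "large \<gamma> A" using assms by (rule large_append_split)
  moreover have "finite S" using assms by (rule large_finite)
  ultimately show ?thesis using large_superset[of S A] by blast
qed

lemma large_replicate_le: "m \<le> m' \<Longrightarrow> large (replicate m' k) S \<Longrightarrow> large (replicate m k) S"
  using large_append_right[of "replicate (m' - m) k"] by (simp flip: replicate_add)

lemma concat_replicate_Suc: "concat (replicate (Suc m) xs) = concat (replicate m xs) @ xs"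
  by (induction m) simp_all

lemma concat_replicate_replicate: "concat (replicate m (replicate r x)) = replicate (m * r) x"
  by (induction m) (simp_all add: replicate_add)

section \<open>Ordered sequences of blocks\<close>

definition blocks_ordered :: "nat set list \<Rightarrow> bool" where
  "blocks_ordered Bs \<longleftrightarrow> sorted_wrt (\<lambda>A B. \<forall>x\<in>A. \<forall>y\<in>B. x < y) Bs"

lemma blocks_ordered_Nil [simp]: "blocks_ordered []"
  by (simp add: blocks_ordered_def)

lemma blocks_ordered_Cons:
  "blocks_ordered (B # Bs) \<longleftrightarrow> (\<forall>C\<in>set Bs. \<forall>x\<in>B. \<forall>y\<in>C. x < y) \<and> blocks_ordered Bs"
  by (simp add: blocks_ordered_def)

lemma blocks_ordered_nth:
  "blocks_ordered Bs \<Longrightarrow> i < j \<Longrightarrow> j < length Bs \<Longrightarrow> x \<in> Bs ! i \<Longrightarrow> y \<in> Bs ! j \<Longrightarrow> x < y"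
  unfolding blocks_ordered_def sorted_wrt_iff_nth_less by blast

lemma blocks_ordered_filter: "blocks_ordered Bs \<Longrightarrow> blocks_ordered (filter Q Bs)"
  unfolding blocks_ordered_def by (simp add: sorted_wrt_filter)

lemma blocks_ordered_take: "blocks_ordered Bs \<Longrightarrow> blocks_ordered (take d Bs)"
  unfolding blocks_ordered_def by (simp add: sorted_wrt_take)

lemma blocks_ordered_refine:
  assumes "blocks_ordered Bs" "length Cs = length Bs" "\<forall>i<length Bs. Cs ! i \<subseteq> Bs ! i"
  shows "blocks_ordered Cs"
  unfolding blocks_ordered_def sorted_wrt_iff_nth_less
proof (intro allI impI ballI)
  fix i j x y assume ij: "i < j" "j < length Cs" and xy: "x \<in> Cs ! i" "y \<in> Cs ! j"
  have j: "j < length Bs" using ij assms(2) by simp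
  then have "Cs ! i \<subseteq> Bs ! i" "Cs ! j \<subseteq> Bs ! j" using ij(1) assms(3) by simp_all
  with xy have "x \<in> Bs ! i" "y \<in> Bs ! j" by blast+
  with assms(1) ij(1) j show "x < y" by (rule blocks_ordered_nth)
qed

lemma obtain_refinement:
  assumes "\<forall>i<length Bs. \<exists>C\<subseteq>Bs ! i. Q i C"
  obtains Cs where "length Cs = length Bs" "\<forall>i<length Bs. Cs ! i \<subseteq> Bs ! i \<and> Q i (Cs ! i)"
proof
  let ?Cs = "map (\<lambda>i. SOME C. C \<subseteq> Bs ! i \<and> Q i C) [0..<length Bs]"
  show "length ?Cs = length Bs" by simp
  show "\<forall>i<length Bs. ?Cs ! i \<subseteq> Bs ! i \<and> Q i (?Cs ! i)"
  proof (intro allI impI)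
    fix i assume i: "i < length Bs"
    with assms have "\<exists>C. C \<subseteq> Bs ! i \<and> Q i C" by blast
    then have "(SOME C. C \<subseteq> Bs ! i \<and> Q i C) \<subseteq> Bs ! i \<and> Q i (SOME C. C \<subseteq> Bs ! i \<and> Q i C)"
      by (rule someI_ex)
    with i show "?Cs ! i \<subseteq> Bs ! i \<and> Q i (?Cs ! i)" by simp
  qed
qed

lemma large_concat_replicate_blocks:
  assumes "large (concat (replicate m \<beta>)) S"
  obtains Bs where "length Bs = m" "blocks_ordered Bs" "\<forall>B\<in>set Bs. large \<beta> B \<and> B \<subseteq> S"
  using assms
proof (induction m arbitrary: S thesis)
  case 0
  then show ?case by simp
next
  case (Suc m)
  have "large (concat (replicate m \<beta>) @ \<beta>) S"
    using Suc.prems(2) by (simp only: concat_replicate_Suc)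
  then obtain A B where AB: "S = A \<union> B" "\<forall>x\<in>A. \<forall>y\<in>B. x < y" "large \<beta> A"
      "large (concat (replicate m \<beta>)) B"
    by (rule large_append_split)
  obtain Bs where Bs: "length Bs = m" "blocks_ordered Bs" "\<forall>C\<in>set Bs. large \<beta> C \<and> C \<subseteq> B"
    using Suc.IH[OF _ AB(4)] by blast
  have "blocks_ordered (A # Bs)" using Bs(2,3) AB(2) by (auto simp: blocks_ordered_Cons)
  with Bs AB show ?case using Suc.prems(1)[of "A # Bs"] by auto
qed

lemma large_concat_replicate_Union:
  "blocks_ordered Bs \<Longrightarrow> \<forall>B\<in>set Bs. large \<beta> B \<Longrightarrow>
   large (concat (replicate (length Bs) \<beta>)) (\<Union>(set Bs))"
proof (induction Bs)
  case (Cons B Bs)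
  then have "large (concat (replicate (length Bs) \<beta>) @ \<beta>) (B \<union> \<Union>(set Bs))"
    by (intro large_append_Un) (auto simp: blocks_ordered_Cons)
  then show ?case by (simp only: concat_replicate_Suc length_Cons list.set Union_insert)
qed simp

section \<open>Homogeneous subsets of exp-sparse sets\<close>

definition homogeneous :: "(nat \<Rightarrow> bool) \<Rightarrow> nat set \<Rightarrow> bool" where
  "homogeneous g C \<longleftrightarrow> (\<forall>x\<in>C. \<forall>y\<in>C. g x = g y)"

lemma homogeneous_if_constant: "\<forall>x\<in>C. g x = c \<Longrightarrow> homogeneous g C"
  by (simp add: homogeneous_def)

lemma exp_sparse_subset: "exp_sparse X \<Longrightarrow> Y \<subseteq> X \<Longrightarrow> exp_sparse Y"
  unfolding exp_sparse_def by blast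

lemma exp_sparse_less: "exp_sparse X \<Longrightarrow> x \<in> X \<Longrightarrow> y \<in> X \<Longrightarrow> x < y \<Longrightarrow> 4 ^ x < y"
  unfolding exp_sparse_def by blast

lemma exp_sparse_Min_less:
  assumes "exp_sparse X" "finite X" "y \<in> X - {Min X}"
  shows "4 ^ Min X < y"
proof -
  have "Min X \<in> X" "Min X < y" using assms(2,3) by (auto intro: Min_in order_le_neq_trans)
  with assms(1,3) show ?thesis using exp_sparse_less by blast
qed

lemma four_times_le_four_power: "4 * e \<le> (4::nat) ^ e"
proof (induction e)
  case (Suc e)
  then show ?case by (cases e) auto
qed simp

lemma exp_sparse_four_power_card_below:
  assumes "exp_sparse X" "t \<in> X"
  shows "4 ^ card {x\<in>X. x < t} \<le> t"
proof (cases "{x\<in>X. x < t} = {}")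
  case True
  have "3 \<le> t" using assms by (simp add: exp_sparse_def)
  then show ?thesis by (subst True) simp
next
  case False
  define S where "S = {x\<in>X. x < t}"
  have fin: "finite S" unfolding S_def by (rule finite_subset[of _ "{..<t}"]) auto
  have "Max S \<in> S" using fin False S_def by (intro Max_in) simp_all
  then have m: "Max S \<in> X" "Max S < t" unfolding S_def by simp_all
  have "S \<subseteq> {1..Max S}"
  proof
    fix x assume "x \<in> S"
    then have "x \<le> Max S" "3 \<le> x" using fin assms(1) by (simp_all add: S_def exp_sparse_def)
    then show "x \<in> {1..Max S}" by simp
  qed
  then have "card S \<le> Max S" using card_mono[of "{1..Max S}" S] by simp
  then have "(4::nat) ^ card S \<le> 4 ^ Max S" by (simp add: power_increasing)
  also have "\<dots> < t" using exp_sparse_less[OF assms(1) m(1) assms(2) m(2)] .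
  finally show ?thesis by (simp add: S_def)
qed

lemma length_filter_colour_classes:
  assumes "\<forall>M\<in>set Ms. M \<noteq> {} \<and> homogeneous g M"
  shows "length (filter (\<lambda>M. \<forall>x\<in>M. g x = c) Ms) + length (filter (\<lambda>M. \<forall>x\<in>M. g x = (\<not> c)) Ms)
    = length Ms"
proof -
  have "filter (\<lambda>M. \<forall>x\<in>M. g x = (\<not> c)) Ms = filter (\<lambda>M. \<not> (\<forall>x\<in>M. g x = c)) Ms"
  proof (rule filter_cong[OF refl])
    fix M assume "M \<in> set Ms"
    with assms have "M \<noteq> {}" "homogeneous g M" by simp_all
    then obtain y where "y \<in> M" "\<forall>x\<in>M. g x = g y" unfolding homogeneous_def by blast
    then show "(\<forall>x\<in>M. g x = (\<not> c)) \<longleftrightarrow> \<not> (\<forall>x\<in>M. g x = c)" by blast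
  qed
  then show ?thesis by (simp only: sum_length_filter_compl)
qed

text \<open>The homogeneity property for \<open>\<omega>\<^sup>k\<cdot>2\<close> is a hypothesis so that the lemma also serves
  inside the induction that establishes it.\<close>
lemma large_replicate_homogeneous_blocks:
  assumes "large (replicate (2 * m) k) Y" "exp_sparse Y"
    and homogeneous_in_double:
      "\<And>A. large (replicate 2 k) A \<Longrightarrow> exp_sparse A \<Longrightarrow> \<exists>C\<subseteq>A. large [k] C \<and> homogeneous g C"
  obtains Ms where "length Ms = m" "blocks_ordered Ms"
    "\<forall>M\<in>set Ms. M \<subseteq> Y \<and> large [k] M \<and> homogeneous g M"
proof -
  have "large (concat (replicate m (replicate 2 k))) Y"
    using assms(1) by (simp add: concat_replicate_replicate mult.commute)
  then obtain Bs where Bs: "length Bs = m" "blocks_ordered Bs"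
      "\<forall>B\<in>set Bs. large (replicate 2 k) B \<and> B \<subseteq> Y"
    by (rule large_concat_replicate_blocks)
  have "\<forall>i<length Bs. \<exists>C\<subseteq>Bs ! i. large [k] C \<and> homogeneous g C"
    using Bs(3) assms(2) homogeneous_in_double by (metis exp_sparse_subset nth_mem)
  then obtain Ms where Ms: "length Ms = length Bs"
      "\<forall>i<length Bs. Ms ! i \<subseteq> Bs ! i \<and> large [k] (Ms ! i) \<and> homogeneous g (Ms ! i)"
    by (rule obtain_refinement)
  have "blocks_ordered Ms" using blocks_ordered_refine Bs(2) Ms by blast
  moreover have "\<forall>M\<in>set Ms. M \<subseteq> Y \<and> large [k] M \<and> homogeneous g M"
    using Ms Bs(3) by (metis in_set_conv_nth nth_mem subset_trans)
  ultimately show thesis using that Ms(1) Bs(1) by simp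
qed

lemma large_omega_Suc_homogeneous_insert_Union:
  assumes "blocks_ordered Bs" "\<forall>B\<in>set Bs. large [k] B \<and> (\<forall>y\<in>B. x < y \<and> g y = g x)"
    and "x \<le> length Bs"
  shows "large [Suc k] (insert x (\<Union>(set Bs)))" "homogeneous g (insert x (\<Union>(set Bs)))"
proof -
  have large_Bs: "\<forall>B\<in>set Bs. large [k] B" using assms(2) by blast
  with assms(1) have "large (concat (replicate (length Bs) [k])) (\<Union>(set Bs))"
    by (rule large_concat_replicate_Union)
  then have "large (replicate (length Bs) k) (\<Union>(set Bs))" by simp
  with assms(3) have "large (replicate x k) (\<Union>(set Bs))" by (rule large_replicate_le)
  moreover have "finite (\<Union>(set Bs))" using large_Bs large_finite by blast
  moreover have "\<forall>y\<in>\<Union>(set Bs). x < y" using assms(2) by blast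
  ultimately show "large [Suc k] (insert x (\<Union>(set Bs)))" by (intro large_omega_Suc_insert)
  have "\<forall>y\<in>insert x (\<Union>(set Bs)). g y = g x" using assms(2) by blast
  then show "homogeneous g (insert x (\<Union>(set Bs)))" by (rule homogeneous_if_constant)
qed

lemma le_other_class_length:
  assumes "a \<le> e" "4 ^ e < b" "l < a" "l + r = b div 2"
  shows "e \<le> (r :: nat)"
proof -
  have "4 * e < b" using assms(2) four_times_le_four_power[of e] by linarith
  then have "2 * e \<le> b div 2" by linarith
  with assms(1,3,4) show ?thesis by linarith
qed

lemma large_double_homogeneous_subset:
  "large (replicate 2 k) A \<Longrightarrow> exp_sparse A \<Longrightarrow> \<exists>C\<subseteq>A. large [k] C \<and> homogeneous g C"
proof (induction k arbitrary: A)
  case 0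
  then have "Min A \<in> A" using large_replicate_0_iff[of 2 A] by (intro Min_in) auto
  moreover have "large [0] {Min A}" by (simp add: large_def fund_def)
  ultimately show ?case by (intro exI[of _ "{Min A}"]) (simp add: homogeneous_def)
next
  case (Suc k)
  have "large ([Suc k] @ [Suc k]) A" using Suc.prems(1) by (simp add: numeral_2_eq_2)
  then obtain A1 A2 where A: "A = A1 \<union> A2" "\<forall>x\<in>A1. \<forall>y\<in>A2. x < y"
      and large_A1: "large [Suc k] A1" and large_A2: "large [Suc k] A2"
    by (rule large_append_split)
  have fin: "finite A1" "finite A2" and ne: "A1 \<noteq> {}" "A2 \<noteq> {}"
    using large_A1 large_A2 large_finite by auto
  define a b where "a = Min A1" and "b = Min A2"
  have a: "a \<in> A1" and b: "b \<in> A2" using fin ne a_def b_def by simp_all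
  have "large (replicate b k) (A2 - {b})" using large_omega_Suc_iff fin ne large_A2 b_def by blast
  then have "large (replicate (2 * (b div 2)) k) (A2 - {b})" by (rule large_replicate_le[rotated]) simp
  moreover have "exp_sparse (A2 - {b})" using Suc.prems(2) A(1) exp_sparse_subset by blast
  ultimately obtain Ms where Ms: "length Ms = b div 2" "blocks_ordered Ms"
      "\<forall>M\<in>set Ms. M \<subseteq> A2 - {b} \<and> large [k] M \<and> homogeneous g M"
    using Suc.IH by (rule large_replicate_homogeneous_blocks)
  let ?class = "\<lambda>c. filter (\<lambda>M. \<forall>y\<in>M. g y = c) Ms"
  have Ms_ne: "\<forall>M\<in>set Ms. M \<noteq> {} \<and> homogeneous g M" using Ms(3) by auto
  have classes: "length (?class (g a)) + length (?class (\<not> g a)) = b div 2"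
    using length_filter_colour_classes[OF Ms_ne] Ms(1) by simp
  have from_class: "\<exists>C\<subseteq>A. large [Suc k] C \<and> homogeneous g C"
    if x: "x \<in> A1" "x \<le> length (?class (g x))" for x
  proof (intro exI conjI)
    let ?C = "insert x (\<Union>(set (?class (g x))))"
    have "blocks_ordered (?class (g x))" using Ms(2) by (rule blocks_ordered_filter)
    moreover have "\<forall>M\<in>set (?class (g x)). large [k] M \<and> (\<forall>y\<in>M. x < y \<and> g y = g x)"
      using Ms(3) A(2) x(1) by fastforce
    ultimately show "large [Suc k] ?C" "homogeneous g ?C"
      using x(2) by (rule large_omega_Suc_homogeneous_insert_Union)+
    show "?C \<subseteq> A" using Ms(3) A(1) x(1) by auto
  qed
  show ?case
  proof (cases "a \<le> length (?class (g a))")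
    case True
    with a show ?thesis by (rule from_class)
  next
    case small_class: False
    show ?thesis
    proof (cases "\<forall>x\<in>A1. g x = g a")
      case True
      with A(1) large_A1 show ?thesis by (intro exI[of _ A1]) (auto intro: homogeneous_if_constant)
    next
      case False
      then obtain e where e: "e \<in> A1" "g e = (\<not> g a)" by blast
      have "a \<le> e" using fin(1) e(1) a_def by simp
      moreover have "4 ^ e < b" using exp_sparse_less[OF Suc.prems(2)] e(1) b A by blast
      moreover have "length (?class (g a)) < a" using small_class by simp
      ultimately have "e \<le> length (?class (\<not> g a))" using classes by (rule le_other_class_length)
      with e(2) have "e \<le> length (?class (g e))" by simp
      with e(1) show ?thesis by (rule from_class)
    qed
  qed
qed

text \<open>Each colouring costs a factor \<open>4\<close> in the number of blocks: pairing them to apply the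
  \<open>\<omega>\<^sup>k\<cdot>2\<close> step halves it, and keeping the majority colour halves it again.\<close>
lemma large_replicate_homogeneous_subset:
  "large (replicate m k) Y \<Longrightarrow> exp_sparse Y \<Longrightarrow> 4 ^ length G \<le> m \<Longrightarrow>
   \<exists>C\<subseteq>Y. large [k] C \<and> (\<forall>g\<in>set G. homogeneous g C)"
proof (induction G arbitrary: m Y)
  case Nil
  then have "large (replicate 1 k) Y" using large_replicate_le[of 1 m] by simp
  then show ?case by auto
next
  case (Cons g G)
  have "2 * (2 * 4 ^ length G) \<le> m" using Cons.prems(3) by simp
  then have "large (replicate (2 * (2 * 4 ^ length G)) k) Y"
    using Cons.prems(1) by (rule large_replicate_le)
  then obtain Ms where Ms: "length Ms = 2 * 4 ^ length G" "blocks_ordered Ms"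
      "\<forall>M\<in>set Ms. M \<subseteq> Y \<and> large [k] M \<and> homogeneous g M"
    using Cons.prems(2) large_double_homogeneous_subset by (rule large_replicate_homogeneous_blocks)
  let ?class = "\<lambda>c. filter (\<lambda>M. \<forall>y\<in>M. g y = c) Ms"
  have "\<forall>M\<in>set Ms. M \<noteq> {} \<and> homogeneous g M" using Ms(3) by auto
  then have classes: "length (?class True) + length (?class False) = 2 * 4 ^ length G"
    using length_filter_colour_classes[of Ms g True] Ms(1) by simp
  obtain c where c: "4 ^ length G \<le> length (?class c)"
  proof (cases "4 ^ length G \<le> length (?class True)")
    case False
    with classes have "4 ^ length G \<le> length (?class False)" by linarith
    then show thesis by (rule that)
  qed (rule that)
  let ?Y = "\<Union>(set (?class c))"
  have "blocks_ordered (?class c)" using Ms(2) by (rule blocks_ordered_filter)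
  moreover have "\<forall>B\<in>set (?class c). large [k] B" using Ms(3) by simp
  ultimately have "large (concat (replicate (length (?class c)) [k])) ?Y"
    by (rule large_concat_replicate_Union)
  then have large_Y: "large (replicate (length (?class c)) k) ?Y" by simp
  have Y_sub: "?Y \<subseteq> Y" using Ms(3) by auto
  with Cons.prems(2) have "exp_sparse ?Y" by (rule exp_sparse_subset)
  from Cons.IH[OF large_Y this c] obtain C
    where C: "C \<subseteq> ?Y" "large [k] C" "\<forall>g\<in>set G. homogeneous g C"
    by blast
  have "homogeneous g C" using C(1) by (intro homogeneous_if_constant[of _ _ c]) auto
  with C Y_sub show ?case by (intro exI[of _ C]) auto
qed

lemma large_omega_Suc_homogeneous_subset:
  assumes "large [Suc k] Y" "exp_sparse Y" "finite J" "4 ^ card J \<le> Min Y"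
  shows "\<exists>C\<subseteq>Y. large [k] C \<and> (\<forall>j\<in>J. homogeneous (g j) C)"
proof -
  obtain js where js: "set js = J" "distinct js" using finite_distinct_list[OF assms(3)] by blast
  have "Y \<noteq> {}" "finite Y" using assms(1) large_finite by auto
  with assms(1) have "large (replicate (Min Y) k) (Y - {Min Y})" by (simp add: large_omega_Suc_iff)
  moreover have "exp_sparse (Y - {Min Y})" using assms(2) by (rule exp_sparse_subset) blast
  moreover have "4 ^ length (map g js) \<le> Min Y" using assms(4) distinct_card[OF js(2)] js(1) by simp
  ultimately have "\<exists>C\<subseteq>Y - {Min Y}. large [k] C \<and> (\<forall>h\<in>set (map g js). homogeneous h C)"
    by (rule large_replicate_homogeneous_subset)
  with js(1) show ?thesis by auto
qed

section \<open>End-homogeneous blocks and groupings\<close>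

lemma grouping_of_blocks:
  assumes "blocks_ordered Fs" "\<forall>F\<in>set Fs. F \<subseteq> X \<and> F \<noteq> {} \<and> large \<alpha> F"
    and "\<forall>i j. i < j \<and> j < length Fs \<longrightarrow>
      (\<forall>x\<in>Fs ! i. \<forall>x'\<in>Fs ! i. \<forall>y\<in>Fs ! j. \<forall>y'\<in>Fs ! j. P x y = P x' y')"
  shows "grouping \<alpha> (ord_of_nat (length Fs)) X P Fs"
proof -
  have F: "Fs ! i \<subseteq> X" "finite (Fs ! i)" "Fs ! i \<noteq> {}" "large \<alpha> (Fs ! i)"
    if "i < length Fs" for i
    using assms(2) nth_mem[OF that] large_finite by blast+
  have Max_less_Min: "Max (Fs ! i) < Min (Fs ! j)" if "i < j" "j < length Fs" for i j
    using blocks_ordered_nth[OF assms(1) that] F(2,3) that by simp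
  have "strict_mono_on {..<length Fs} (\<lambda>i. Max (Fs ! i))"
  proof (rule strict_mono_onI)
    fix i j assume "i \<in> {..<length Fs}" "j \<in> {..<length Fs}" "i < j"
    then have j: "j < length Fs" by simp
    have "Max (Fs ! i) < Min (Fs ! j)" using \<open>i < j\<close> j by (rule Max_less_Min)
    moreover have "Min (Fs ! j) \<le> Max (Fs ! j)" using F(2,3)[OF j] by (intro Max_ge Min_in)
    ultimately show "Max (Fs ! i) < Max (Fs ! j)" by (rule less_le_trans)
  qed
  then have "card ((\<lambda>i. Max (Fs ! i)) ` {..<length Fs}) = length Fs"
    by (simp add: card_image strict_mono_on_imp_inj_on)
  moreover have "{Max (Fs ! i) | i. i < length Fs} = (\<lambda>i. Max (Fs ! i)) ` {..<length Fs}"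
    by auto
  ultimately have "large (ord_of_nat (length Fs)) {Max (Fs ! i) | i. i < length Fs}"
    by (simp add: ord_of_nat_def large_replicate_0_iff)
  with F Max_less_Min assms(3) show ?thesis unfolding grouping_def by blast
qed

definition end_homogeneous :: "(nat \<Rightarrow> nat \<Rightarrow> bool) \<Rightarrow> nat set list \<Rightarrow> bool" where
  "end_homogeneous P Bs \<longleftrightarrow>
     (\<forall>i j. i < j \<longrightarrow> j < length Bs \<longrightarrow> (\<forall>x\<in>Bs ! i. homogeneous (P x) (Bs ! j)))"

lemma end_homogeneous_take: "end_homogeneous P Bs \<Longrightarrow> end_homogeneous P (take d Bs)"
  by (simp add: end_homogeneous_def)

lemma end_homogeneous_colour_eq:
  assumes "end_homogeneous P Es" "i < j" "j < length Es" "x \<in> Es ! i" "y \<in> Es ! j"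
    and "finite (Es ! j)"
  shows "P x y = P x (Min (Es ! j))"
proof -
  have "homogeneous (P x) (Es ! j)" using assms(1-4) by (simp add: end_homogeneous_def)
  moreover have "Min (Es ! j) \<in> Es ! j" using assms(5,6) by (auto intro: Min_in)
  ultimately show ?thesis using assms(5) unfolding homogeneous_def by blast
qed

lemma grouping_of_end_homogeneous_blocks:
  assumes "blocks_ordered Es" "\<forall>E\<in>set Es. E \<subseteq> X \<and> large [Suc n] E \<and> 4 ^ length Es \<le> Min E"
    and "exp_sparse X" "end_homogeneous P Es"
  shows "\<exists>F. grouping [n] (ord_of_nat (length Es)) X P F"
proof -
  let ?d = "length Es"
  have E: "Es ! i \<subseteq> X" "large [Suc n] (Es ! i)" "4 ^ ?d \<le> Min (Es ! i)" if "i < ?d" for i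
    using assms(2) nth_mem[OF that] by blast+
  let ?col = "\<lambda>j x. P x (Min (Es ! j))"
  have "\<forall>i<?d. \<exists>F\<subseteq>Es ! i. large [n] F \<and> (\<forall>j\<in>{i<..<?d}. homogeneous (?col j) F)"
  proof (intro allI impI)
    fix i assume i: "i < ?d"
    have "(4::nat) ^ card {i<..<?d} \<le> 4 ^ ?d" by (simp add: power_increasing)
    then have "4 ^ card {i<..<?d} \<le> Min (Es ! i)" using E(3)[OF i] by (rule le_trans)
    moreover have "exp_sparse (Es ! i)" using assms(3) E(1)[OF i] by (rule exp_sparse_subset)
    ultimately show "\<exists>F\<subseteq>Es ! i. large [n] F \<and> (\<forall>j\<in>{i<..<?d}. homogeneous (?col j) F)"
      using large_omega_Suc_homogeneous_subset[OF E(2)[OF i], of "{i<..<?d}"] by simp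
  qed
  then obtain Fs where Fs: "length Fs = ?d"
      "\<forall>i<?d. Fs ! i \<subseteq> Es ! i \<and> large [n] (Fs ! i) \<and> (\<forall>j\<in>{i<..<?d}. homogeneous (?col j) (Fs ! i))"
    by (rule obtain_refinement)
  have "\<forall>i<?d. Fs ! i \<subseteq> Es ! i" using Fs(2) by blast
  with assms(1) Fs(1) have "blocks_ordered Fs" by (rule blocks_ordered_refine)
  moreover have "\<forall>F\<in>set Fs. F \<subseteq> X \<and> F \<noteq> {} \<and> large [n] F"
  proof
    fix F assume "F \<in> set Fs"
    then obtain i where i: "i < ?d" "F = Fs ! i" using Fs(1) by (metis in_set_conv_nth)
    then have "F \<subseteq> Es ! i" "large [n] F" using Fs(2) by simp_all
    with E(1)[OF i(1)] show "F \<subseteq> X \<and> F \<noteq> {} \<and> large [n] F" by auto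
  qed
  moreover have "\<forall>i j. i < j \<and> j < length Fs \<longrightarrow>
      (\<forall>x\<in>Fs ! i. \<forall>x'\<in>Fs ! i. \<forall>y\<in>Fs ! j. \<forall>y'\<in>Fs ! j. P x y = P x' y')"
  proof (intro allI impI ballI)
    fix i j x x' y y'
    assume "i < j \<and> j < length Fs" and x: "x \<in> Fs ! i" "x' \<in> Fs ! i" and y: "y \<in> Fs ! j" "y' \<in> Fs ! j"
    then have ij: "i < j" "j < ?d" using Fs(1) by simp_all
    then have sub: "Fs ! i \<subseteq> Es ! i" "Fs ! j \<subseteq> Es ! j" using Fs(2) by simp_all
    have fin: "finite (Es ! j)" using E(2)[OF ij(2)] by (rule large_finite)
    have hom: "homogeneous (?col j) (Fs ! i)" using Fs(2) ij by simp
    have "P x y = ?col j x" "P x' y' = ?col j x'"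
      using end_homogeneous_colour_eq[OF assms(4) ij _ _ fin] x y sub by blast+
    moreover have "?col j x = ?col j x'" using hom x unfolding homogeneous_def by blast
    ultimately show "P x y = P x' y'" by simp
  qed
  ultimately have "grouping [n] (ord_of_nat (length Fs)) X P Fs" by (rule grouping_of_blocks)
  with Fs(1) show ?thesis by auto
qed

lemma homogeneous_for_smaller_points:
  assumes "large [Suc (Suc k)] D" "D \<subseteq> X" "exp_sparse X"
  shows "\<exists>E\<subseteq>D. large [Suc k] E \<and> (\<forall>x\<in>X. x < Min D \<longrightarrow> homogeneous (P x) E)"
proof -
  have "D \<noteq> {}" "finite D" using assms(1) large_finite by auto
  then have "Min D \<in> X" using assms(2) Min_in by blast
  with assms(3) have "4 ^ card {x\<in>X. x < Min D} \<le> Min D"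
    by (rule exp_sparse_four_power_card_below)
  moreover have "exp_sparse D" using assms(3,2) by (rule exp_sparse_subset)
  ultimately have "\<exists>E\<subseteq>D. large [Suc k] E \<and> (\<forall>x\<in>{x\<in>X. x < Min D}. homogeneous (P x) E)"
    using large_omega_Suc_homogeneous_subset[OF assms(1), of "{x\<in>X. x < Min D}"] by simp
  then show ?thesis by blast
qed

lemma end_homogeneous_blocks_exist:
  assumes "large [Suc (Suc (Suc n))] X" "exp_sparse X"
  obtains Es where "length Es = Min X" "blocks_ordered Es" "end_homogeneous P Es"
    "\<forall>E\<in>set Es. E \<subseteq> X \<and> large [Suc n] E \<and> 4 ^ Min X < Min E"
proof -
  have "finite X" "X \<noteq> {}" using assms(1) large_finite by auto
  with assms(1) have "large (concat (replicate (Min X) [Suc (Suc n)])) (X - {Min X})"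
    by (simp add: large_omega_Suc_iff)
  then obtain Ds where Ds: "length Ds = Min X" "blocks_ordered Ds"
      "\<forall>D\<in>set Ds. large [Suc (Suc n)] D \<and> D \<subseteq> X - {Min X}"
    by (rule large_concat_replicate_blocks)
  have D: "large [Suc (Suc n)] (Ds ! i)" "Ds ! i \<subseteq> X - {Min X}" if "i < length Ds" for i
    using Ds(3) nth_mem[OF that] by blast+
  have "\<forall>i<length Ds. \<exists>E\<subseteq>Ds ! i. large [Suc n] E \<and>
          (\<forall>x\<in>X. x < Min (Ds ! i) \<longrightarrow> homogeneous (P x) E)"
    using D assms(2) by (blast intro: homogeneous_for_smaller_points)
  then obtain Es where Es: "length Es = length Ds"
      "\<forall>i<length Ds. Es ! i \<subseteq> Ds ! i \<and> large [Suc n] (Es ! i) \<and>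
         (\<forall>x\<in>X. x < Min (Ds ! i) \<longrightarrow> homogeneous (P x) (Es ! i))"
    by (rule obtain_refinement)
  have sub: "\<forall>i<length Ds. Es ! i \<subseteq> Ds ! i" using Es(2) by blast
  with Ds(2) Es(1) have "blocks_ordered Es" by (rule blocks_ordered_refine)
  moreover have "end_homogeneous P Es"
    unfolding end_homogeneous_def
  proof (intro allI impI ballI)
    fix i j x assume ij: "i < j" "j < length Es" and x: "x \<in> Es ! i"
    have i: "i < length Ds" and j: "j < length Ds" using ij Es(1) by simp_all
    have x_D: "x \<in> Ds ! i" using sub i x by blast
    have "Ds ! j \<noteq> {}" "finite (Ds ! j)" using D(1)[OF j] large_finite by auto
    then have "Min (Ds ! j) \<in> Ds ! j" by simp
    with x_D have "x < Min (Ds ! j)" using blocks_ordered_nth[OF Ds(2) ij(1) j] by blast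
    moreover have "x \<in> X" using x_D D(2)[OF i] by blast
    ultimately show "homogeneous (P x) (Es ! j)" using Es(2) j by blast
  qed
  moreover have "\<forall>E\<in>set Es. E \<subseteq> X \<and> large [Suc n] E \<and> 4 ^ Min X < Min E"
  proof
    fix E assume "E \<in> set Es"
    then obtain i where "i < length Ds" "E = Es ! i" using Es(1) by (metis in_set_conv_nth)
    with Es(2) D(2) have E: "E \<subseteq> X - {Min X}" "large [Suc n] E" by blast+
    then have "E \<noteq> {}" "finite E" using large_finite by auto
    then have "Min E \<in> X - {Min X}" using E(1) Min_in by blast
    with assms(2) \<open>finite X\<close> have "4 ^ Min X < Min E" by (rule exp_sparse_Min_less)
    with E show "E \<subseteq> X \<and> large [Suc n] E \<and> 4 ^ Min X < Min E" by blast
  qed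
  ultimately show thesis using that Es(1) Ds(1) by simp
qed

theorem lemma2p6:
  fixes X :: "nat set" and n d :: nat
  assumes "finite X"
    and "large (omega_pow (n + 3)) X"
    and "exp_sparse X"
    and "d \<le> Min X"
  shows "\<forall>P :: nat \<Rightarrow> nat \<Rightarrow> bool. \<exists>F. grouping (omega_pow n) (ord_of_nat d) X P F"
proof
  fix P :: "nat \<Rightarrow> nat \<Rightarrow> bool"
  have "n + 3 = Suc (Suc (Suc n))" by simp
  with assms(2) have "large [Suc (Suc (Suc n))] X" by (simp only: omega_pow_def)
  then obtain Es where Es: "length Es = Min X" "blocks_ordered Es" "end_homogeneous P Es"
      "\<forall>E\<in>set Es. E \<subseteq> X \<and> large [Suc n] E \<and> 4 ^ Min X < Min E"
    using assms(3) by (rule end_homogeneous_blocks_exist)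
  let ?Es = "take d Es"
  have len: "length ?Es = d" using assms(4) Es(1) by simp
  have bound: "4 ^ d \<le> Min E" if "E \<in> set Es" for E
  proof -
    have "(4::nat) ^ d \<le> 4 ^ Min X" using assms(4) by (simp add: power_increasing)
    also have "\<dots> < Min E" using Es(4) that by blast
    finally show ?thesis by simp
  qed
  have "\<forall>E\<in>set ?Es. E \<subseteq> X \<and> large [Suc n] E \<and> 4 ^ d \<le> Min E"
    using Es(4) bound by (auto dest: in_set_takeD)
  moreover have "blocks_ordered ?Es" using Es(2) by (rule blocks_ordered_take)
  moreover have "end_homogeneous P ?Es" using Es(3) by (rule end_homogeneous_take)
  ultimately have "\<exists>F. grouping [n] (ord_of_nat d) X P F"
    using grouping_of_end_homogeneous_blocks[of ?Es X n P, unfolded len] assms(3) by blast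
  then show "\<exists>F. grouping (omega_pow n) (ord_of_nat d) X P F" by (simp add: omega_pow_def)
qed

end
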